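(* For every integer $a \ge 2$ and every $b \in \mathbb{N}$, $R_\mathrm{cyc}(C_a^\mathrm{mon}, P_b^\mathrm{mon}) = 1 + (a-1)(b-1)$.
   Context: All graphs are finite, simple and undirected, and a graph of order $n$ has vertex set $\{0,1,\ldots,n-1\}$; $K_n$ is the complete graph on $\{0,\ldots,n-1\}$. A $2$-edge-coloring of $K_n$ assigns each edge a color in $\{1,2\}$. For a graph $H$ and such a coloring, an embedding of $H$ in color $j$ is an injective map $\varphi\colon V(H)\to V(K_n)$ such that for every edge $uv$ of $H$ the edge $\{\varphi(u),\varphi(v)\}$ has color $j$; it is increasing up to a cyclic permutation if there exists $t\in V(H)$ such that $(\varphi(t),\ldots,\varphi(|H|-1),\varphi(0),\ldots,\varphi(t-1))$ is increasing. The cyclic Ramsey number $R_\mathrm{cyc}(H_1,H_2)$ is the smallest $n$ such that every $2$-edge-coloring of $K_n$ admits an embedding of $H_1$ in color $1$ or of $H_2$ in color $2$ that is increasing up to a cyclic permutation. The monotone path $P_n^\mathrm{mon}$ has edges $\{i,i+1\}$, $0\le i\le n-2$. For $n\ge3$ the monotone cycle $C_n^\mathrm{mon}$ is $P_n^\mathrm{mon}$ plus the edge $\{0,n-1\}$; by convention $C_2^\mathrm{mon}=K_2$. *)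

theory Defs
  imports Main
begin

text \<open>A graph of order n on vertex set {0..<n}: a pair (order, edge set), where
  edges are 2-element subsets of {0..<n}.\<close>
type_synonym graph = "nat \<times> nat set set"

definition Pmon :: "nat \<Rightarrow> graph" where
  "Pmon n = (n, {{i, i + 1} | i. i + 2 \<le> n})"

text \<open>Monotone cycle, for n \<ge> 2 (C_2 = K_2 by convention).\<close>
definition Cmon :: "nat \<Rightarrow> graph" where
  "Cmon n = (if n = 2 then (2, {{0, 1}})
             else (n, {{i, i + 1} | i. i + 2 \<le> n} \<union> {{0, n - 1}}))"

definition two_coloring :: "nat \<Rightarrow> (nat set \<Rightarrow> nat) \<Rightarrow> bool" where
  "two_coloring n c \<longleftrightarrow> (\<forall>i<n. \<forall>j<n. i \<noteq> j \<longrightarrow> c {i, j} \<in> {1, 2})"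

definition embedding_in_color ::
  "graph \<Rightarrow> nat \<Rightarrow> (nat set \<Rightarrow> nat) \<Rightarrow> nat \<Rightarrow> (nat \<Rightarrow> nat) \<Rightarrow> bool" where
  "embedding_in_color H n c j \<phi> \<longleftrightarrow>
     inj_on \<phi> {0..<fst H} \<and> \<phi> ` {0..<fst H} \<subseteq> {0..<n} \<and>
     (\<forall>u v. {u, v} \<in> snd H \<longrightarrow> c {\<phi> u, \<phi> v} = j)"

definition cyc_increasing :: "graph \<Rightarrow> (nat \<Rightarrow> nat) \<Rightarrow> bool" where
  "cyc_increasing H \<phi> \<longleftrightarrow>
     (\<exists>t < fst H. \<forall>k. k + 1 < fst H \<longrightarrow>
        \<phi> ((t + k) mod fst H) < \<phi> ((t + k + 1) mod fst H))"

definition cyc_ramsey_prop :: "graph \<Rightarrow> graph \<Rightarrow> nat \<Rightarrow> bool" where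
  "cyc_ramsey_prop H1 H2 n \<longleftrightarrow>
     (\<forall>c. two_coloring n c \<longrightarrow>
        (\<exists>\<phi>. embedding_in_color H1 n c 1 \<phi> \<and> cyc_increasing H1 \<phi>) \<or>
        (\<exists>\<phi>. embedding_in_color H2 n c 2 \<phi> \<and> cyc_increasing H2 \<phi>))"

definition R_cyc :: "graph \<Rightarrow> graph \<Rightarrow> nat" where
  "R_cyc H1 H2 = (LEAST n. cyc_ramsey_prop H1 H2 n)"

end

theory Submission
  imports Defs "HOL-Library.FuncSet" "HOL-Library.Infinite_Set"
begin

(* Upper bound, in the manner of Erdos-Szekeres: label every vertex v by the number of
   vertices of a longest increasing colour-2 path ending in v. If some label reaches b,
   that path is a monotone P_b. Otherwise at most b - 1 labels occur on 1 + (a-1)(b-1)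
   vertices, so a vertices share a label; since a colour-2 edge uv with u < v strictly
   increases the label, these vertices span a colour-1 clique, and listing them in
   increasing order gives a monotone C_a.
   Lower bound: cut (a-1)(b-1) vertices into a-1 consecutive blocks of b-1 vertices and
   colour an edge 2 iff it lies inside a block. A colour-2 path stays in one block, which
   is too small for b vertices; a colour-1 cycle, read cyclically from its least vertex,
   visits strictly increasing blocks and so needs a blocks. *)

definition increasing_path :: "(nat set \<Rightarrow> nat) \<Rightarrow> nat \<Rightarrow> nat \<Rightarrow> (nat \<Rightarrow> nat) \<Rightarrow> bool" where
  "increasing_path c j k \<phi> \<longleftrightarrow> (\<forall>i. Suc i < k \<longrightarrow> \<phi> i < \<phi> (Suc i) \<and> c {\<phi> i, \<phi> (Suc i)} = j)"

lemma increasing_path_strict_mono_on: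
  assumes "increasing_path c j k \<phi>"
  shows "strict_mono_on {..<k} \<phi>"
proof (rule strict_mono_onI)
  fix r s assume "r \<in> {..<k}" "s \<in> {..<k}" "r < s"
  then show "\<phi> r < \<phi> s"
  proof (induction s)
    case (Suc s)
    then have "\<phi> s < \<phi> (Suc s)" using assms by (simp add: increasing_path_def)
    with Suc show ?case by (cases "r = s") auto
  qed simp
qed

lemma strict_mono_on_cyc_increasing:
  assumes "0 < fst H" "strict_mono_on {..<fst H} \<phi>"
  shows "cyc_increasing H \<phi>"
  unfolding cyc_increasing_def
  using assms by (intro exI[of _ 0]) (auto intro: strict_mono_onD)

lemma increasing_path_Pmon:
  assumes "increasing_path c j b \<phi>" "0 < b" "\<phi> (b - 1) < n"
  shows "embedding_in_color (Pmon b) n c j \<phi> \<and> cyc_increasing (Pmon b) \<phi>"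
proof -
  have mono: "strict_mono_on {..<b} \<phi>"
    using assms(1) by (rule increasing_path_strict_mono_on)
  have "\<phi> i < n" if "i < b" for i
  proof -
    have "\<phi> i \<le> \<phi> (b - 1)"
      using that by (intro strict_mono_on_leD[OF mono]) auto
    with assms(3) show ?thesis by simp
  qed
  moreover have "c {\<phi> u, \<phi> v} = j" if "{u, v} \<in> snd (Pmon b)" for u v
    using that assms(1) by (auto simp: Pmon_def doubleton_eq_iff increasing_path_def insert_commute)
  ultimately show ?thesis
    using mono assms(2) strict_mono_on_imp_inj_on[OF mono]
    by (auto simp: embedding_in_color_def Pmon_def atLeast0LessThan intro: strict_mono_on_cyc_increasing)
qed

lemma clique_embedding:
  assumes "\<And>u v. {u, v} \<in> snd H \<Longrightarrow> u < fst H \<and> v < fst H \<and> u \<noteq> v"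
    and "inj_on \<phi> {..<fst H}" "\<phi> ` {..<fst H} \<subseteq> S" "S \<subseteq> {..<n}"
    and "\<And>x y. x \<in> S \<Longrightarrow> y \<in> S \<Longrightarrow> x \<noteq> y \<Longrightarrow> c {x, y} = j"
  shows "embedding_in_color H n c j \<phi>"
  unfolding embedding_in_color_def atLeast0LessThan
proof (intro conjI allI impI)
  fix u v assume "{u, v} \<in> snd H"
  with assms(1) have "u < fst H" "v < fst H" "u \<noteq> v" by auto
  with assms(2,3) show "c {\<phi> u, \<phi> v} = j"
    by (intro assms(5)) (auto dest: inj_onD)
qed (use assms(2-4) in auto)

lemma Cmon_edge_bounds:
  assumes "2 \<le> a" "{u, v} \<in> snd (Cmon a)"
  shows "u < a \<and> v < a \<and> u \<noteq> v"
  using assms by (auto simp: Cmon_def doubleton_eq_iff split: if_splits)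

lemma Cmon_edge_Suc_mod:
  assumes "2 \<le> a" "i < a"
  shows "{i, Suc i mod a} \<in> snd (Cmon a)"
proof (cases "Suc i < a")
  case True
  then show ?thesis using assms by (auto simp: Cmon_def)
next
  case False
  with assms have "Suc i = a" by simp
  then show ?thesis by (auto simp: Cmon_def insert_commute)
qed

function max_path_len :: "(nat set \<Rightarrow> nat) \<Rightarrow> nat \<Rightarrow> nat \<Rightarrow> nat" where
  "max_path_len c j v =
     Suc (Max (insert 0 (max_path_len c j ` {u. u < v \<and> c {u, v} = j})))"
  by auto
termination by (relation "measure (\<lambda>(c, j, v). v)") auto

declare max_path_len.simps [simp del]

lemma max_path_len_pos: "0 < max_path_len c j v"
  by (subst max_path_len.simps) simp

lemma max_path_len_less:
  assumes "u < v" "c {u, v} = j"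
  shows "max_path_len c j u < max_path_len c j v"
proof -
  have "max_path_len c j u \<le> Max (insert 0 (max_path_len c j ` {u. u < v \<and> c {u, v} = j}))"
    using assms by (intro Max_ge) auto
  then show ?thesis by (subst (2) max_path_len.simps) simp
qed

lemma increasing_path_ending_at:
  "1 \<le> k \<Longrightarrow> k \<le> max_path_len c j v \<Longrightarrow> \<exists>\<phi>. increasing_path c j k \<phi> \<and> \<phi> (k - 1) = v"
proof (induction v arbitrary: k rule: less_induct)
  case (less v)
  show ?case
  proof (cases "k = 1")
    case True
    then show ?thesis by (intro exI[of _ "\<lambda>_. v"]) (simp add: increasing_path_def)
  next
    case False
    define M where "M = Max (insert 0 (max_path_len c j ` {u. u < v \<and> c {u, v} = j}))"
    have "max_path_len c j v = Suc M"
      unfolding M_def by (subst max_path_len.simps) simp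
    with less.prems False have "k - 1 \<le> M" "M \<noteq> 0" by auto
    moreover have "M \<in> insert 0 (max_path_len c j ` {u. u < v \<and> c {u, v} = j})"
      unfolding M_def by (intro Max_in) auto
    ultimately obtain u where u: "u < v" "c {u, v} = j" "k - 1 \<le> max_path_len c j u"
      by auto
    moreover have "1 \<le> k - 1" using less.prems False by simp
    ultimately obtain \<psi> where \<psi>: "increasing_path c j (k - 1) \<psi>" "\<psi> (k - 2) = u"
      using less.IH[of u "k - 1"] by (auto simp: numeral_2_eq_2)
    have "increasing_path c j k (\<psi>(k - 1 := v))"
      unfolding increasing_path_def
    proof (intro allI impI)
      fix i assume "Suc i < k"
      then consider "Suc i < k - 1" | "i = k - 2" by linarith
      then show "(\<psi>(k - 1 := v)) i < (\<psi>(k - 1 := v)) (Suc i) \<and>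
                 c {(\<psi>(k - 1 := v)) i, (\<psi>(k - 1 := v)) (Suc i)} = j"
        by cases (use \<psi> u False less.prems in \<open>auto simp: increasing_path_def\<close>)
    qed
    then show ?thesis by auto
  qed
qed

lemma max_path_len_eq_imp_color_neq:
  assumes "x \<noteq> y" "max_path_len c j x = max_path_len c j y"
  shows "c {x, y} \<noteq> j"
proof
  assume "c {x, y} = j"
  with assms show False
    using max_path_len_less[of x y c j] max_path_len_less[of y x c j]
    by (cases x y rule: linorder_cases) (auto simp: insert_commute)
qed

lemma clique_Cmon:
  assumes "2 \<le> a" "finite S" "a \<le> card S" "S \<subseteq> {..<n}"
    and "\<And>x y. x \<in> S \<Longrightarrow> y \<in> S \<Longrightarrow> x \<noteq> y \<Longrightarrow> c {x, y} = j"
  shows "\<exists>\<phi>. embedding_in_color (Cmon a) n c j \<phi> \<and> cyc_increasing (Cmon a) \<phi>"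
proof -
  have fst: "fst (Cmon a) = a" by (simp add: Cmon_def)
  obtain \<phi> where \<phi>: "strict_mono_on {..<card S} \<phi>" "\<And>i. i < card S \<Longrightarrow> \<phi> i \<in> S"
    using finite_enumerate[OF assms(2)] by blast
  have mono: "strict_mono_on {..<a} \<phi>"
    using assms(3) by (intro monotone_on_subset[OF \<phi>(1)]) auto
  have "embedding_in_color (Cmon a) n c j \<phi>"
    using assms(1,3-5) \<phi>(2) strict_mono_on_imp_inj_on[OF mono]
    by (intro clique_embedding[where S = S]) (auto simp: fst dest: Cmon_edge_bounds)
  moreover have "cyc_increasing (Cmon a) \<phi>"
    using assms(1) mono by (intro strict_mono_on_cyc_increasing) (auto simp: fst)
  ultimately show ?thesis by blast
qed

lemma cyc_increasing_Cmon_increasing_path: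
  assumes "2 \<le> a" "embedding_in_color (Cmon a) n c j \<phi>" "cyc_increasing (Cmon a) \<phi>"
  obtains \<psi> where "increasing_path c j a \<psi>" "\<psi> ` {..<a} \<subseteq> {..<n}"
proof -
  have fst: "fst (Cmon a) = a" by (simp add: Cmon_def)
  obtain t where t: "\<And>k. k + 1 < a \<Longrightarrow> \<phi> ((t + k) mod a) < \<phi> ((t + k + 1) mod a)"
    using assms(3) unfolding cyc_increasing_def fst by blast
  define \<psi> where "\<psi> i = \<phi> ((t + i) mod a)" for i
  have "increasing_path c j a \<psi>"
    unfolding increasing_path_def
  proof (intro allI impI conjI)
    fix i assume "Suc i < a"
    then show "\<psi> i < \<psi> (Suc i)" using t[of i] by (simp add: \<psi>_def)
    have "{(t + i) mod a, Suc ((t + i) mod a) mod a} \<in> snd (Cmon a)"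
      using assms(1) by (intro Cmon_edge_Suc_mod) auto
    then show "c {\<psi> i, \<psi> (Suc i)} = j"
      using assms(2) by (simp add: \<psi>_def embedding_in_color_def mod_Suc_eq)
  qed
  moreover have "\<psi> ` {..<a} \<subseteq> {..<n}"
  proof
    fix x assume "x \<in> \<psi> ` {..<a}"
    then obtain i where "x = \<phi> ((t + i) mod a)" by (auto simp: \<psi>_def)
    moreover have "(t + i) mod a \<in> {0..<fst (Cmon a)}" using assms(1) by (simp add: fst)
    ultimately show "x \<in> {..<n}"
      using assms(2) unfolding embedding_in_color_def by fastforce
  qed
  ultimately show thesis using that by blast
qed

definition block_coloring :: "nat \<Rightarrow> nat set \<Rightarrow> nat" where
  "block_coloring k e = (if \<forall>x\<in>e. \<forall>y\<in>e. x div k = y div k then 2 else 1)"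

lemma block_coloring_doubleton:
  "block_coloring k {x, y} = (if x div k = y div k then 2 else 1)"
  by (auto simp: block_coloring_def)

lemma two_coloring_block_coloring: "two_coloring n (block_coloring k)"
  by (simp add: two_coloring_def block_coloring_def)

lemma increasing_path_block_coloring_div:
  assumes "increasing_path (block_coloring k) 1 m \<psi>" "i < m"
  shows "\<psi> 0 div k + i \<le> \<psi> i div k"
  using assms(2)
proof (induction i)
  case (Suc i)
  have "\<psi> i < \<psi> (Suc i)" "\<psi> i div k \<noteq> \<psi> (Suc i) div k"
    using assms(1) Suc.prems
    by (auto simp: increasing_path_def block_coloring_doubleton split: if_splits)
  then have "\<psi> i div k < \<psi> (Suc i) div k"
    using div_le_mono[of "\<psi> i" "\<psi> (Suc i)" k] by simp
  with Suc show ?case by simp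
qed simp

lemma increasing_path_block_coloring_length:
  assumes "increasing_path (block_coloring k) 1 m \<psi>" "0 < m" "\<psi> (m - 1) < l * k"
  shows "m \<le> l"
proof -
  have "m - 1 \<le> \<psi> (m - 1) div k"
    using increasing_path_block_coloring_div[OF assms(1), of "m - 1"] assms(2) by simp
  also have "\<dots> < l"
    using assms(3) by (rule less_mult_imp_div_less)
  finally show ?thesis by simp
qed

lemma block_coloring_path_length:
  assumes "\<And>i. Suc i < b \<Longrightarrow> block_coloring k {\<phi> i, \<phi> (Suc i)} = 2"
    and "inj_on \<phi> {..<b}" "0 < k"
  shows "b \<le> k"
proof -
  have same_block: "\<phi> i div k = \<phi> 0 div k" if "i < b" for i
    using that
  proof (induction i)
    case (Suc i)
    then show ?case using assms(1)[of i] by (simp add: block_coloring_doubleton split: if_splits)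
  qed simp
  have "inj_on (\<lambda>i. \<phi> i mod k) {..<b}"
  proof (rule inj_onI)
    fix i i' assume "i \<in> {..<b}" "i' \<in> {..<b}" "\<phi> i mod k = \<phi> i' mod k"
    then have "\<phi> i = \<phi> i'"
      using same_block by (metis div_mult_mod_eq lessThan_iff)
    with assms(2) \<open>i \<in> {..<b}\<close> \<open>i' \<in> {..<b}\<close> show "i = i'" by (auto dest: inj_onD)
  qed
  then have "card {..<b} \<le> card {..<k}"
    by (rule card_inj_on_le) (auto simp: assms(3))
  then show ?thesis by simp
qed

lemma Pmon_edge: "Suc i < b \<Longrightarrow> {i, Suc i} \<in> snd (Pmon b)"
  unfolding Pmon_def by force

lemma cyc_ramsey_prop_lower:
  assumes "2 \<le> a" "n \<le> (a - 1) * (b - 1)"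
  shows "\<not> cyc_ramsey_prop (Cmon a) (Pmon b) n"
proof -
  let ?c = "block_coloring (b - 1)"
  have no_cycle: "\<not> (embedding_in_color (Cmon a) n ?c 1 \<phi> \<and> cyc_increasing (Cmon a) \<phi>)" for \<phi>
  proof
    assume "embedding_in_color (Cmon a) n ?c 1 \<phi> \<and> cyc_increasing (Cmon a) \<phi>"
    with assms(1) obtain \<psi> where \<psi>: "increasing_path ?c 1 a \<psi>" "\<psi> ` {..<a} \<subseteq> {..<n}"
      by (auto elim: cyc_increasing_Cmon_increasing_path)
    have "\<psi> (a - 1) < n"
      using \<psi>(2) assms(1) by (simp add: image_subset_iff)
    with assms(2) have "\<psi> (a - 1) < (a - 1) * (b - 1)" by simp
    with \<psi>(1) assms(1) have "a \<le> a - 1"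
      by (intro increasing_path_block_coloring_length) auto
    with assms(1) show False by simp
  qed
  have no_path: "\<not> (embedding_in_color (Pmon b) n ?c 2 \<phi> \<and> cyc_increasing (Pmon b) \<phi>)" for \<phi>
  proof
    assume "embedding_in_color (Pmon b) n ?c 2 \<phi> \<and> cyc_increasing (Pmon b) \<phi>"
    then have emb: "inj_on \<phi> {..<b}" "\<phi> ` {..<b} \<subseteq> {..<n}"
        "\<And>u v. {u, v} \<in> snd (Pmon b) \<Longrightarrow> ?c {\<phi> u, \<phi> v} = 2"
      and "0 < b"
      by (auto simp: embedding_in_color_def cyc_increasing_def Pmon_def atLeast0LessThan)
    then have "0 < n" by auto
    with assms(2) have "0 < b - 1" by (cases "b - 1 = 0") auto
    with emb have "b \<le> b - 1"
      by (intro block_coloring_path_length) (auto intro: Pmon_edge)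
    with \<open>0 < b\<close> show False by simp
  qed
  show ?thesis
    unfolding cyc_ramsey_prop_def using two_coloring_block_coloring no_cycle no_path by blast
qed

lemma cyc_ramsey_prop_upper:
  assumes "2 \<le> a" "1 \<le> b"
  shows "cyc_ramsey_prop (Cmon a) (Pmon b) (1 + (a - 1) * (b - 1))"
proof -
  define N where "N = 1 + (a - 1) * (b - 1)"
  have "(\<exists>\<phi>. embedding_in_color (Cmon a) N c 1 \<phi> \<and> cyc_increasing (Cmon a) \<phi>) \<or>
        (\<exists>\<phi>. embedding_in_color (Pmon b) N c 2 \<phi> \<and> cyc_increasing (Pmon b) \<phi>)"
    if "two_coloring N c" for c
  proof (cases "\<exists>v<N. b \<le> max_path_len c 2 v")
    case True
    then obtain \<phi> where "increasing_path c 2 b \<phi>" "\<phi> (b - 1) < N"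
      using increasing_path_ending_at assms(2) by blast
    with assms(2) have "embedding_in_color (Pmon b) N c 2 \<phi> \<and> cyc_increasing (Pmon b) \<phi>"
      by (intro increasing_path_Pmon) auto
    then show ?thesis by blast
  next
    case False
    let ?L = "max_path_len c 2"
    have L: "?L \<in> {..<N} \<rightarrow> {1..b - 1}"
      using False max_path_len_pos[of c 2] by (auto simp: Suc_le_eq)
    have "?L 0 \<in> {1..b - 1}"
      using L by (auto simp: N_def)
    then obtain y
      where y: "card {..<N} \<le> card (?L -` {y} \<inter> {..<N}) * card {1..b - 1}"
      using pigeonhole_card[OF L] by fastforce
    define S where "S = ?L -` {y} \<inter> {..<N}"
    have "a \<le> card S"
    proof (rule ccontr)
      assume "\<not> a \<le> card S"
      then have "card S * (b - 1) \<le> (a - 1) * (b - 1)"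
        by (intro mult_le_mono1) simp
      moreover have "N \<le> card S * (b - 1)"
        using y unfolding S_def by simp
      ultimately show False unfolding N_def by linarith
    qed
    moreover have "c {x, z} = 1" if "x \<in> S" "z \<in> S" "x \<noteq> z" for x z
      using \<open>two_coloring N c\<close> that max_path_len_eq_imp_color_neq[of x z c 2]
      by (auto simp: S_def two_coloring_def)
    ultimately show ?thesis
      using clique_Cmon[of a S N c 1] assms(1) by (auto simp: S_def)
  qed
  then show ?thesis
    unfolding cyc_ramsey_prop_def N_def by blast
qed

theorem theorem4p12:
  fixes a b :: nat
  assumes "a \<ge> 2" and "b \<ge> 1"
  shows "R_cyc (Cmon a) (Pmon b) = 1 + (a - 1) * (b - 1)"
  unfolding R_cyc_def
proof (rule Least_equality)
  show "cyc_ramsey_prop (Cmon a) (Pmon b) (1 + (a - 1) * (b - 1))"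
    using assms by (rule cyc_ramsey_prop_upper)
next
  fix n assume "cyc_ramsey_prop (Cmon a) (Pmon b) n"
  then show "1 + (a - 1) * (b - 1) \<le> n"
    using cyc_ramsey_prop_lower[OF assms(1), of n b] by linarith
qed

end
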